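(* Let $\approx$ be an equivalence relation on $\mathbb W$. Then $\approx$ satisfies (AP) if and only if it satisfies both (SP) and (DP), where: (AP) for all $A,B\in\mathbb W$: $A\approx B$ iff $A\setminus B\approx B\setminus A$; (SP) for all $A,A',B,B'\in\mathbb W$ with $A\cap B=\emptyset$ and $A'\cap B'=\emptyset$: if $A\approx A'$ and $B\approx B'$ then $A\cup B\approx A'\cup B'$; (DP) for all $A,A',C,C'\in\mathbb W$ with $A\subseteq C$ and $A'\subseteq C'$: if $A\approx A'$ and $C\approx C'$ then $C\setminus A\approx C'\setminus A'$.
   Context: Let $\mathbb N=\{0,1,2,\dots\}$. $\mathbb{W}$ is the family of finitary point sets: sets $A\subseteq\bigcup_{k\ge1}\mathbb N^k$ of finite tuples of natural numbers such that for every $n\in\mathbb N$ there is $h$ with $A\cap\{0,\dots,n\}^k=\emptyset$ for all $k>h$. *)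

theory Defs
  imports Main
begin

text \<open>Finite tuples of naturals of length \<ge> 1 are represented as nonempty lists.
  A tuple xs lies in {0..n}^k iff length xs = k and all entries are \<le> n.\<close>

definition finitary :: "nat list set \<Rightarrow> bool" where
  "finitary A \<longleftrightarrow> (\<forall>xs\<in>A. xs \<noteq> []) \<and>
     (\<forall>n::nat. \<exists>h::nat. \<forall>k>h. \<forall>xs\<in>A. \<not> (length xs = k \<and> (\<forall>x\<in>set xs. x \<le> n)))"

definition WW :: "nat list set set" where
  "WW = {A. finitary A}"

definition AP :: "(nat list set \<times> nat list set) set \<Rightarrow> bool" where
  "AP r \<longleftrightarrow> (\<forall>A\<in>WW. \<forall>B\<in>WW. (A, B) \<in> r \<longleftrightarrow> (A - B, B - A) \<in> r)"

definition SP :: "(nat list set \<times> nat list set) set \<Rightarrow> bool" where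
  "SP r \<longleftrightarrow> (\<forall>A\<in>WW. \<forall>A'\<in>WW. \<forall>B\<in>WW. \<forall>B'\<in>WW.
     A \<inter> B = {} \<longrightarrow> A' \<inter> B' = {} \<longrightarrow> (A, A') \<in> r \<longrightarrow> (B, B') \<in> r \<longrightarrow>
     (A \<union> B, A' \<union> B') \<in> r)"

definition DP :: "(nat list set \<times> nat list set) set \<Rightarrow> bool" where
  "DP r \<longleftrightarrow> (\<forall>A\<in>WW. \<forall>A'\<in>WW. \<forall>C\<in>WW. \<forall>C'\<in>WW.
     A \<subseteq> C \<longrightarrow> A' \<subseteq> C' \<longrightarrow> (A, A') \<in> r \<longrightarrow> (C, C') \<in> r \<longrightarrow>
     (C - A, C' - A') \<in> r)"

end

theory Submission
  imports Defs
begin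

text \<open>Under (AP) the class of a pair \<open>(X, Y)\<close> depends only on the difference pair
  \<open>(X - Y, Y - X)\<close>. For (SP) and (DP) one therefore builds three sets whose pairwise
  differences are those of the two given related pairs and of the pair to be related,
  and chains them by transitivity. Conversely, (DP) and (SP) applied with the
  reflexive pair \<open>(A \<inter> B, A \<inter> B)\<close> remove, respectively add back, the common part of
  \<open>A\<close> and \<open>B\<close>.\<close>

lemma finitary_subset: "finitary A \<Longrightarrow> B \<subseteq> A \<Longrightarrow> finitary B"
  unfolding finitary_def by (meson subsetD)

lemma finitary_Un:
  assumes "finitary A" "finitary B"
  shows "finitary (A \<union> B)"
  unfolding finitary_def
proof (intro conjI allI)
  fix n :: nat
  obtain hA where "\<forall>k>hA. \<forall>xs\<in>A. \<not> (length xs = k \<and> (\<forall>x\<in>set xs. x \<le> n))"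
    using assms(1) unfolding finitary_def by blast
  moreover obtain hB where "\<forall>k>hB. \<forall>xs\<in>B. \<not> (length xs = k \<and> (\<forall>x\<in>set xs. x \<le> n))"
    using assms(2) unfolding finitary_def by blast
  ultimately show "\<exists>h. \<forall>k>h. \<forall>xs\<in>A \<union> B. \<not> (length xs = k \<and> (\<forall>x\<in>set xs. x \<le> n))"
    by (intro exI[of _ "max hA hB"]) auto
next
  show "\<forall>xs\<in>A \<union> B. xs \<noteq> []"
    using assms unfolding finitary_def by blast
qed

lemma WW_subset: "A \<in> WW \<Longrightarrow> B \<subseteq> A \<Longrightarrow> B \<in> WW"
  unfolding WW_def using finitary_subset by blast

lemma WW_Un: "A \<in> WW \<Longrightarrow> B \<in> WW \<Longrightarrow> A \<union> B \<in> WW"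
  unfolding WW_def using finitary_Un by blast

lemma AP_transfer:
  assumes "AP r" "X \<in> WW" "Y \<in> WW" "X' \<in> WW" "Y' \<in> WW" "(X, Y) \<in> r"
    and "X' - Y' = X - Y" "Y' - X' = Y - X"
  shows "(X', Y') \<in> r"
  using assms unfolding AP_def by metis

lemma AP_imp_SP:
  assumes ap: "AP r" and "trans r"
  shows "SP r"
  unfolding SP_def
proof (intro ballI impI)
  fix A A' B B'
  assume W: "A \<in> WW" "A' \<in> WW" "B \<in> WW" "B' \<in> WW"
    and disj: "A \<inter> B = {}" "A' \<inter> B' = {}" and rA: "(A, A') \<in> r" and rB: "(B, B') \<in> r"
  have small: "S \<subseteq> A \<union> A' \<union> B \<union> B' \<Longrightarrow> S \<in> WW" for S
    by (rule WW_subset[OF WW_Un[OF WW_Un[OF WW_Un[OF W(1,2)] W(3)] W(4)]])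
  define X1 where "X1 = (A \<inter> B') \<union> (A - A' - B') \<union> (B - A' - B')"
  define X2 where "X2 = (B \<inter> A') \<union> (B - A' - B') \<union> (A' - A - B)"
  define X3 where "X3 = (A \<inter> B') \<union> (B' - A - B) \<union> (A' - A - B)"
  have W': "X1 \<in> WW" "X2 \<in> WW" "X3 \<in> WW" "A \<union> B \<in> WW" "A' \<union> B' \<in> WW"
    unfolding X1_def X2_def X3_def by (rule small, blast)+
  have "(X1, X2) \<in> r"
    by (rule AP_transfer[OF ap W(1,2) W'(1,2) rA]; unfold X1_def X2_def; use disj in blast)
  moreover have "(X2, X3) \<in> r"
    by (rule AP_transfer[OF ap W(3,4) W'(2,3) rB]; unfold X2_def X3_def; use disj in blast)
  ultimately have "(X1, X3) \<in> r"
    using \<open>trans r\<close> by (meson transD)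
  then show "(A \<union> B, A' \<union> B') \<in> r"
    by (rule AP_transfer[OF ap W'(1,3,4,5)]; unfold X1_def X3_def; use disj in blast)
qed

lemma AP_imp_DP:
  assumes ap: "AP r" and "sym r" "trans r"
  shows "DP r"
  unfolding DP_def
proof (intro ballI impI)
  fix A A' C C'
  assume W: "A \<in> WW" "A' \<in> WW" "C \<in> WW" "C' \<in> WW"
    and sub: "A \<subseteq> C" "A' \<subseteq> C'" and rA: "(A, A') \<in> r" and rC: "(C, C') \<in> r"
  have small: "S \<subseteq> A \<union> A' \<union> C \<union> C' \<Longrightarrow> S \<in> WW" for S
    by (rule WW_subset[OF WW_Un[OF WW_Un[OF WW_Un[OF W(1,2)] W(3)] W(4)]])
  define X1 where "X1 = (C - A - C') \<union> (A - C') \<union> (A \<inter> C' - A')"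
  define X2 where "X2 = (C' - A' - C) \<union> (A' - C) \<union> (A \<inter> C' - A')"
  define X3 where "X3 = (C - A - C') \<union> (A' - C) \<union> (A' \<inter> C - A)"
  have W': "X1 \<in> WW" "X2 \<in> WW" "X3 \<in> WW" "C - A \<in> WW" "C' - A' \<in> WW"
    unfolding X1_def X2_def X3_def by (rule small, blast)+
  have "(X1, X2) \<in> r"
    by (rule AP_transfer[OF ap W(3,4) W'(1,2) rC]; unfold X1_def X2_def; use sub in blast)
  moreover have "(X1, X3) \<in> r"
    by (rule AP_transfer[OF ap W(1,2) W'(1,3) rA]; unfold X1_def X3_def; use sub in blast)
  ultimately have "(X3, X2) \<in> r"
    using \<open>sym r\<close> \<open>trans r\<close> by (meson symD transD)
  then show "(C - A, C' - A') \<in> r"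
    by (rule AP_transfer[OF ap W'(3,2,4,5)]; unfold X2_def X3_def; use sub in blast)
qed

lemma SPD:
  assumes "SP r" "A \<in> WW" "A' \<in> WW" "B \<in> WW" "B' \<in> WW"
    and "A \<inter> B = {}" "A' \<inter> B' = {}" "(A, A') \<in> r" "(B, B') \<in> r"
  shows "(A \<union> B, A' \<union> B') \<in> r"
  using assms unfolding SP_def by blast

lemma DPD:
  assumes "DP r" "A \<in> WW" "A' \<in> WW" "C \<in> WW" "C' \<in> WW"
    and "A \<subseteq> C" "A' \<subseteq> C'" "(A, A') \<in> r" "(C, C') \<in> r"
  shows "(C - A, C' - A') \<in> r"
  using assms unfolding DP_def by blast

lemma SP_DP_imp_AP:
  assumes refl: "refl_on WW r" and sp: "SP r" and dp: "DP r"
  shows "AP r"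
  unfolding AP_def
proof (intro ballI)
  fix A B assume W: "A \<in> WW" "B \<in> WW"
  have I: "A \<inter> B \<in> WW" "A - B \<in> WW" "B - A \<in> WW"
    using W by (auto intro: WW_subset)
  have rI: "(A \<inter> B, A \<inter> B) \<in> r"
    using refl I(1) by (rule refl_onD)
  show "(A, B) \<in> r \<longleftrightarrow> (A - B, B - A) \<in> r"
  proof
    assume "(A, B) \<in> r"
    have "(A - A \<inter> B, B - A \<inter> B) \<in> r"
      by (rule DPD[OF dp I(1) I(1) W _ _ rI \<open>(A, B) \<in> r\<close>]) blast+
    moreover have "A - A \<inter> B = A - B" "B - A \<inter> B = B - A"
      by blast+
    ultimately show "(A - B, B - A) \<in> r"
      by simp
  next
    assume "(A - B, B - A) \<in> r"
    have "((A - B) \<union> (A \<inter> B), (B - A) \<union> (A \<inter> B)) \<in> r"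
      by (rule SPD[OF sp I(2,3,1,1) _ _ \<open>(A - B, B - A) \<in> r\<close> rI]) blast+
    moreover have "(A - B) \<union> (A \<inter> B) = A" "(B - A) \<union> (A \<inter> B) = B"
      by blast+
    ultimately show "(A, B) \<in> r"
      by simp
  qed
qed

theorem proposition1p7:
  fixes r :: "(nat list set \<times> nat list set) set"
  assumes "equiv WW r"
  shows "AP r \<longleftrightarrow> SP r \<and> DP r"
proof -
  have "refl_on WW r" "sym r" "trans r"
    using assms unfolding equiv_def by auto
  then show ?thesis
    using AP_imp_SP AP_imp_DP SP_DP_imp_AP by blast
qed

end
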